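(* Let $\mathcal{A},\mathcal{B}$ be Hilbert spaces with $\dim\mathcal{A}=m$, $\dim\mathcal{B}=n$, $2\le m\le n$, with computational bases $\{|j\rangle\}$. Let $S=\operatorname{span}\{|j\rangle|k+1\rangle-|j+1\rangle|k\rangle : 0\le j\le m-2,\ 0\le k\le n-2\}\subseteq\mathcal{A}\otimes\mathcal{B}$. Then the orthogonal complement $S^\perp$ is strongly PPT-unextendible.
   Context: A bipartite positive semidefinite operator $E$ is PPT if its partial transpose $E^{T_B}$ (defined by $(|i\rangle\langle k|\otimes|j\rangle\langle l|)^{T_B}=|i\rangle\langle k|\otimes|l\rangle\langle j|$) is positive semidefinite. A subspace $V\subseteq\mathcal{A}\otimes\mathcal{B}$ is PPT-extendible if there exists a nonzero PPT operator whose support is contained in $V^\perp$; $V$ is strongly PPT-unextendible if for every positive integer $k$, $V^{\otimes k}\subseteq\mathcal{A}^{\otimes k}\otimes\mathcal{B}^{\otimes k}$ is not PPT-extendible (with respect to the bipartition $\mathcal{A}^{\otimes k}:\mathcal{B}^{\otimes k}$). *)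

theory Defs
  imports Complex_Main "HOL-Library.Complex_Order"
begin

text \<open>A vector of A (x) B (dim A = m, dim B = n) is a function
  nat \<times> nat \<Rightarrow> complex, coordinates w.r.t. the product basis |j>|l>, only the
  coordinates in the grid {..<m} \<times> {..<n} matter.
  A vector of A^(x)k (x) B^(x)k is a function on pairs (a,b) of index lists,
  a = (a_1..a_k) labelling |a_1>..|a_k> in A^(x)k and b likewise in B^(x)k.\<close>

type_synonym vec1 = "nat \<times> nat \<Rightarrow> complex"
type_synonym idx = "nat list \<times> nat list"
type_synonym vec = "idx \<Rightarrow> complex"
type_synonym op = "idx \<Rightarrow> idx \<Rightarrow> complex"

definition grid :: "nat \<Rightarrow> nat \<Rightarrow> (nat \<times> nat) set" where
  "grid m n = {..<m} \<times> {..<n}"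

definition idxs :: "nat \<Rightarrow> nat \<Rightarrow> nat \<Rightarrow> idx set" where
  "idxs m n k = {(a,b). length a = k \<and> length b = k \<and> set a \<subseteq> {..<m} \<and> set b \<subseteq> {..<n}}"

definition cspan :: "('x \<Rightarrow> complex) set \<Rightarrow> ('x \<Rightarrow> complex) set" where
  "cspan X = {u. \<exists>F c. finite F \<and> F \<subseteq> X \<and> u = (\<lambda>x. \<Sum>g\<in>F. c g * g x)}"

definition perp1 :: "nat \<Rightarrow> nat \<Rightarrow> vec1 set \<Rightarrow> vec1 set" where
  "perp1 m n W = {v. (\<forall>x. x \<notin> grid m n \<longrightarrow> v x = 0) \<and>
      (\<forall>w\<in>W. (\<Sum>x\<in>grid m n. cnj (w x) * v x) = 0)}"

definition gen :: "nat \<Rightarrow> nat \<Rightarrow> vec1" where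
  "gen j l = (\<lambda>x. (if x = (j, l+1) then 1 else 0) - (if x = (j+1, l) then 1 else 0))"

definition S_space :: "nat \<Rightarrow> nat \<Rightarrow> vec1 set" where
  "S_space m n = cspan {gen j l | j l. j \<le> m - 2 \<and> l \<le> n - 2}"

text \<open>k-th tensor power V^(x)k, viewed inside A^(x)k (x) B^(x)k:
  v_1 (x) ... (x) v_k has coordinate prod_i v_i(a_i,b_i) at (a,b).\<close>
definition tprod :: "vec1 list \<Rightarrow> vec" where
  "tprod vs = (\<lambda>(a,b). \<Prod>i<length vs. (vs ! i) (a ! i, b ! i))"

definition tpow :: "nat \<Rightarrow> vec1 set \<Rightarrow> vec set" where
  "tpow k V = cspan {tprod vs | vs. length vs = k \<and> set vs \<subseteq> V}"

definition inner_on :: "idx set \<Rightarrow> vec \<Rightarrow> vec \<Rightarrow> complex" where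
  "inner_on I u v = (\<Sum>x\<in>I. cnj (u x) * v x)"

definition apply_op :: "idx set \<Rightarrow> op \<Rightarrow> vec \<Rightarrow> vec" where
  "apply_op I E w = (\<lambda>x. \<Sum>y\<in>I. E x y * w y)"

definition psd :: "idx set \<Rightarrow> op \<Rightarrow> bool" where
  "psd I E \<longleftrightarrow> (\<forall>x y. x \<notin> I \<or> y \<notin> I \<longrightarrow> E x y = 0) \<and>
     (\<forall>v. inner_on I v (apply_op I E v) \<ge> 0)"

text \<open>Partial transpose on the B^(x)k factor:
  (|a><a'| (x) |b><b'|)^T_B = |a><a'| (x) |b'><b|.\<close>
definition ptrans :: "op \<Rightarrow> op" where
  "ptrans E = (\<lambda>(a,b) (a',b'). E (a,b') (a',b))"

definition ppt :: "idx set \<Rightarrow> op \<Rightarrow> bool" where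
  "ppt I E \<longleftrightarrow> psd I E \<and> psd I (ptrans E)"

definition supp_in_perp :: "idx set \<Rightarrow> op \<Rightarrow> vec set \<Rightarrow> bool" where
  "supp_in_perp I E V \<longleftrightarrow> (\<forall>w. \<forall>v\<in>V. inner_on I v (apply_op I E w) = 0)"

definition ppt_extendible :: "idx set \<Rightarrow> vec set \<Rightarrow> bool" where
  "ppt_extendible I V \<longleftrightarrow> (\<exists>E. ppt I E \<and> E \<noteq> (\<lambda>_ _. 0) \<and> supp_in_perp I E V)"

definition strongly_ppt_unextendible :: "nat \<Rightarrow> nat \<Rightarrow> vec1 set \<Rightarrow> bool" where
  "strongly_ppt_unextendible m n V \<longleftrightarrow>
     (\<forall>k\<ge>1. \<not> ppt_extendible (idxs m n k) (tpow k V))"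

end

theory Submission
  imports Defs
begin

text \<open>The vectors \<open>\<phi>(x) = \<Sum>\<^sub>j\<^sub>,\<^sub>l x\<^bsup>j+l\<^esup> |j\<rangle>|l\<rangle>\<close> are constant along anti-diagonals, hence
  orthogonal to every generator of \<open>S\<close>, so the product vectors \<open>\<phi>(z\<^sub>1) \<otimes> \<dots> \<otimes> \<phi>(z\<^sub>k)\<close>
  lie in \<open>(S\<^sup>\<perp>)\<^sup>\<otimes>\<^sup>k\<close>. If \<open>E\<close> is supported on the orthogonal complement of that space,
  \<open>\<langle>\<phi>(z)|E|\<phi>(z)\<rangle> = 0\<close>. Moving the transpose onto the vector, this is
  \<open>\<langle>u(z)|E\<^sup>T\<^sup>B|u(z)\<rangle> = 0\<close> with \<open>u(z)\<^sub>a\<^sub>b = z\<^sup>a conj(z)\<^sup>b\<close>; positivity of \<open>E\<^sup>T\<^sup>B\<close> then forces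
  \<open>E\<^sup>T\<^sup>B u(z) = 0\<close> for all \<open>z\<close>. Since the monomials \<open>z\<^sup>a conj(z)\<^sup>b\<close> are linearly
  independent functions of \<open>z \<in> \<complex>\<^sup>k\<close>, \<open>E\<^sup>T\<^sup>B = 0\<close> and hence \<open>E = 0\<close>.\<close>

lemma polyfun_grouped_coeffs_zero:
  fixes c :: "'s \<Rightarrow> 'a::{idom,real_normed_div_algebra}" and h :: "'s \<Rightarrow> nat"
  assumes fin: "finite S" and inf: "infinite X"
    and zero: "\<forall>x\<in>X. (\<Sum>s\<in>S. c s * x ^ h s) = 0"
  shows "(\<Sum>s\<in>{s\<in>S. h s = i}. c s) = 0"
proof -
  define N where "N = sum h S"
  define d where "d i = (\<Sum>s\<in>{s\<in>S. h s = i}. c s)" for i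
  have hN: "h ` S \<subseteq> {..N}" using fin by (auto simp: N_def intro: member_le_sum)
  have grouped: "(\<Sum>s\<in>S. c s * x ^ h s) = (\<Sum>i\<le>N. d i * x ^ i)" for x
  proof -
    have "(\<Sum>s\<in>S. c s * x ^ h s) = (\<Sum>i\<le>N. \<Sum>s\<in>{s\<in>S. h s = i}. c s * x ^ h s)"
      using sum.group[OF fin _ hN, of "\<lambda>s. c s * x ^ h s"] by simp
    also have "\<dots> = (\<Sum>i\<le>N. d i * x ^ i)"
      unfolding d_def sum_distrib_right by (intro sum.cong refl) auto
    finally show ?thesis .
  qed
  show ?thesis
  proof (cases "i \<le> N")
    case True
    have "X \<subseteq> {x. (\<Sum>i\<le>N. d i * x ^ i) = 0}" using zero grouped by auto
    hence "infinite {x. (\<Sum>i\<le>N. d i * x ^ i) = 0}" using inf finite_subset by blast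
    hence "\<forall>i\<le>N. d i = 0" using polyfun_finite_roots[of d N] by blast
    thus ?thesis using True d_def by simp
  next
    case False
    hence "{s\<in>S. h s = i} = {}" using hN by auto
    thus ?thesis by (metis sum.empty)
  qed
qed

lemma infinite_unit_circle: "infinite {w::complex. cnj w * w = 1}"
proof
  define f where "f x = Complex x (sqrt (1 - x\<^sup>2))" for x
  assume fin: "finite {w::complex. cnj w * w = 1}"
  have "f ` {-1..1} \<subseteq> {w. cnj w * w = 1}"
  proof
    fix w assume "w \<in> f ` {-1..1}"
    then obtain x where x: "x \<in> {-1..1}" "w = f x" by blast
    hence "(sqrt (1 - x\<^sup>2))\<^sup>2 = 1 - x\<^sup>2" by (simp add: abs_square_le_1 abs_le_iff)
    thus "w \<in> {w. cnj w * w = 1}" using x by (simp add: f_def complex_eq_iff power2_eq_square)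
  qed
  moreover have "inj_on f {-1..1}" by (auto simp: f_def intro!: inj_onI)
  ultimately have "finite {-1..(1::real)}"
    using fin finite_subset finite_image_iff by metis
  thus False using infinite_Icc[of "-1::real" 1] by simp
qed

lemma power_scaled_unit_cnj:
  fixes w :: complex and r :: real
  assumes unit: "cnj w * w = 1" and "l \<le> N"
  shows "(of_real r * w) ^ j * cnj (of_real r * w) ^ l * w ^ N = of_real r ^ (j + l) * w ^ (j + (N - l))"
proof -
  have "cnj w ^ l * w ^ l = 1" using unit by (metis power_mult_distrib power_one)
  moreover have "w ^ N = w ^ l * w ^ (N - l)" using assms(2) by (simp flip: power_add)
  ultimately have "cnj w ^ l * w ^ N = w ^ (N - l)" by (metis mult.assoc mult_1)
  hence "(of_real r * w) ^ j * cnj (of_real r * w) ^ l * w ^ N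
       = of_real r ^ (j + l) * w ^ j * (cnj w ^ l * w ^ N)"
    by (simp add: power_mult_distrib power_add mult_ac)
  also have "\<dots> = of_real r ^ (j + l) * w ^ (j + (N - l))"
    using \<open>cnj w ^ l * w ^ N = w ^ (N - l)\<close> by (simp add: power_add mult_ac)
  finally show ?thesis .
qed

text \<open>Writing \<open>z = r w\<close> with \<open>|w| = 1\<close>, the monomial \<open>z\<^sup>j conj(z)\<^sup>l\<close> becomes \<open>r\<^sup>j\<^sup>+\<^sup>l w\<^sup>j\<^sup>-\<^sup>l\<close>;
  the exponent pair is recovered from \<open>j - l\<close> (a power of \<open>w\<close>) and \<open>j + l\<close> (a power of \<open>r\<close>).\<close>

lemma monomial_cnj_coeffs_zero:
  fixes c :: "nat \<times> nat \<Rightarrow> complex"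
  assumes fin: "finite S"
    and zero: "\<forall>z. (\<Sum>s\<in>S. c s * (z ^ fst s * cnj z ^ snd s)) = 0"
    and s: "s \<in> S"
  shows "c s = 0"
proof -
  define N where "N = sum snd S"
  define h where "h s = fst s + (N - snd s)" for s :: "nat \<times> nat"
  have sndN: "snd t \<le> N" if "t \<in> S" for t
    using fin that by (auto simp: N_def intro: member_le_sum)
  have same_h: "(\<Sum>t\<in>{t\<in>S. h t = e}. c t * of_real r ^ (fst t + snd t)) = 0" for r e
  proof -
    have "\<forall>w\<in>{w. cnj w * w = 1}. (\<Sum>t\<in>S. (c t * of_real r ^ (fst t + snd t)) * w ^ h t) = 0"
    proof
      fix w :: complex assume "w \<in> {w. cnj w * w = 1}"
      hence unit: "cnj w * w = 1" by simp
      have "(\<Sum>t\<in>S. (c t * of_real r ^ (fst t + snd t)) * w ^ h t)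
          = (\<Sum>t\<in>S. c t * ((of_real r * w) ^ fst t * cnj (of_real r * w) ^ snd t)) * w ^ N"
        unfolding sum_distrib_right h_def
        using power_scaled_unit_cnj[OF unit sndN] by (intro sum.cong refl) (metis mult.assoc)
      also have "\<dots> = 0" by (simp only: zero mult_zero_left)
      finally show "(\<Sum>t\<in>S. (c t * of_real r ^ (fst t + snd t)) * w ^ h t) = 0" .
    qed
    from polyfun_grouped_coeffs_zero[OF fin infinite_unit_circle this]
    show ?thesis .
  qed
  define T where "T = {t\<in>S. h t = h s}"
  have "inj_on (\<lambda>t. fst t + snd t) T"
  proof (rule inj_onI)
    fix t u assume "t \<in> T" "u \<in> T" "fst t + snd t = fst u + snd u"
    thus "t = u" using sndN[of t] sndN[of u] by (auto simp: T_def h_def prod_eq_iff)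
  qed
  hence "{t\<in>T. fst t + snd t = fst s + snd s} = {s}"
    using s by (auto simp: T_def dest: inj_onD)
  moreover have "infinite (range (of_real :: real \<Rightarrow> complex))"
    using finite_imageD[OF _ inj_of_real] infinite_UNIV_char_0 by blast
  moreover have "\<forall>x\<in>range of_real. (\<Sum>t\<in>T. c t * x ^ (fst t + snd t)) = 0"
    using same_h by (auto simp: T_def)
  ultimately show ?thesis
    using polyfun_grouped_coeffs_zero[of T "range of_real" c "\<lambda>t. fst t + snd t" "fst s + snd s"] fin
    by (simp add: T_def)
qed

definition power_prod :: "(nat \<Rightarrow> complex) \<Rightarrow> nat list \<Rightarrow> complex" where
  "power_prod z a = (\<Prod>i<length a. z i ^ (a ! i))"

lemma power_prod_Cons: "power_prod z (j # a) = z 0 ^ j * power_prod (\<lambda>i. z (Suc i)) a"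
  unfolding power_prod_def by (simp only: length_Cons prod.lessThan_Suc_shift) simp

lemma idxs_0: "idxs m n 0 = {([],[])}"
  by (auto simp: idxs_def)

lemma idxs_Suc:
  "idxs m n (Suc k) = (\<lambda>(s,t). (fst s # fst t, snd s # snd t)) ` (grid m n \<times> idxs m n k)"
proof
  show "idxs m n (Suc k) \<subseteq> (\<lambda>(s,t). (fst s # fst t, snd s # snd t)) ` (grid m n \<times> idxs m n k)"
  proof
    fix x assume "x \<in> idxs m n (Suc k)"
    then obtain j a l b where "x = (j # a, l # b)" "length a = k" "length b = k"
      "j < m" "l < n" "set a \<subseteq> {..<m}" "set b \<subseteq> {..<n}"
      by (auto simp: idxs_def length_Suc_conv)
    thus "x \<in> (\<lambda>(s,t). (fst s # fst t, snd s # snd t)) ` (grid m n \<times> idxs m n k)"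
      by (auto simp: idxs_def grid_def image_iff intro!: bexI[of _ "((j,l),(a,b))"])
  qed
qed (auto simp: idxs_def grid_def)

lemma idxs_eq_Times:
  "idxs m n k = {a. length a = k \<and> set a \<subseteq> {..<m}} \<times> {b. length b = k \<and> set b \<subseteq> {..<n}}"
  by (auto simp: idxs_def)

lemma finite_idxs: "finite (idxs m n k)"
  by (induction k) (auto simp: idxs_0 idxs_Suc grid_def)

lemma sum_idxs_Suc:
  "(\<Sum>x\<in>idxs m n (Suc k). f x) =
   (\<Sum>s\<in>grid m n. \<Sum>t\<in>idxs m n k. f (fst s # fst t, snd s # snd t))"
proof -
  have "inj_on (\<lambda>(s,t). (fst s # fst t, snd s # snd t)) (grid m n \<times> idxs m n k)"
    by (rule inj_onI) (auto simp: prod_eq_iff)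
  thus ?thesis
    unfolding idxs_Suc by (simp add: sum.reindex sum.cartesian_product case_prod_unfold)
qed

lemma power_prod_cnj_coeffs_zero:
  assumes "\<forall>z. (\<Sum>x\<in>idxs m n k. c x * (power_prod z (fst x) * cnj (power_prod z (snd x)))) = 0"
    and "x \<in> idxs m n k"
  shows "c x = 0"
  using assms
proof (induction k arbitrary: c x)
  case 0
  then show ?case by (simp add: idxs_0 power_prod_def)
next
  case (Suc k)
  define G where "G s z = (\<Sum>t\<in>idxs m n k. c (fst s # fst t, snd s # snd t) *
    (power_prod z (fst t) * cnj (power_prod z (snd t))))" for s z
  have G_zero: "G s z = 0" if "s \<in> grid m n" for s z
  proof (rule monomial_cnj_coeffs_zero[of "grid m n", OF _ _ that])
    show "\<forall>w. (\<Sum>s\<in>grid m n. G s z * (w ^ fst s * cnj w ^ snd s)) = 0"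
    proof
      fix w
      have "(\<Sum>s\<in>grid m n. G s z * (w ^ fst s * cnj w ^ snd s)) =
          (\<Sum>x\<in>idxs m n (Suc k). c x *
            (power_prod (case_nat w z) (fst x) * cnj (power_prod (case_nat w z) (snd x))))"
        unfolding sum_idxs_Suc G_def sum_distrib_right
        by (intro sum.cong refl) (simp add: power_prod_Cons algebra_simps)
      also have "\<dots> = 0" using Suc.prems(1) by blast
      finally show "(\<Sum>s\<in>grid m n. G s z * (w ^ fst s * cnj w ^ snd s)) = 0" .
    qed
  qed (simp add: grid_def)
  from Suc.prems(2) obtain s t where st: "s \<in> grid m n" "t \<in> idxs m n k"
    "x = (fst s # fst t, snd s # snd t)" unfolding idxs_Suc by auto
  have "c (fst s # fst t, snd s # snd t) = 0"
    using Suc.IH[of "\<lambda>t. c (fst s # fst t, snd s # snd t)" t] G_zero[OF st(1)] st(2)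
    unfolding G_def by blast
  thus ?case using st by simp
qed

lemma quadratic_nonneg_imp_linear_coeff_zero:
  fixes a q :: real
  assumes "\<forall>t. 0 \<le> t * t * q - 2 * t * a"
  shows "a = 0"
proof -
  define t where "t = a / (\<bar>q\<bar> + 1)"
  have ta: "t * (\<bar>q\<bar> + 1) = a" by (simp add: t_def)
  have "0 \<le> (\<bar>q\<bar> + 1)\<^sup>2 * (t * t * q - 2 * t * a)" using assms by simp
  also have "\<dots> = (t * (\<bar>q\<bar> + 1)) * (t * (\<bar>q\<bar> + 1)) * q - 2 * (t * (\<bar>q\<bar> + 1)) * a * (\<bar>q\<bar> + 1)"
    by (simp add: power2_eq_square algebra_simps)
  also have "\<dots> = a * a * (q - 2 * \<bar>q\<bar> - 2)"
    unfolding ta by (simp add: algebra_simps)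
  finally have "a * a * (2 * \<bar>q\<bar> + 2 - q) \<le> 0" by (simp add: algebra_simps)
  moreover have "2 * \<bar>q\<bar> + 2 - q > 0" by linarith
  ultimately have "a * a \<le> 0" by (simp add: mult_le_0_iff)
  thus ?thesis using not_real_square_gt_zero[of a] by linarith
qed

lemma inner_on_apply_op_add_smult:
  "inner_on I (\<lambda>x. v x + s * w x) (apply_op I E (\<lambda>x. v x + s * w x)) =
   inner_on I v (apply_op I E v) + cnj s * inner_on I w (apply_op I E v)
   + s * inner_on I v (apply_op I E w) + cnj s * s * inner_on I w (apply_op I E w)"
proof -
  have "apply_op I E (\<lambda>x. v x + s * w x) = (\<lambda>x. apply_op I E v x + s * apply_op I E w x)"
    by (simp add: apply_op_def algebra_simps sum.distrib sum_distrib_left)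
  thus ?thesis unfolding inner_on_def
    by (simp add: algebra_simps sum.distrib sum_distrib_left)
qed

text \<open>Hermiticity is not part of \<^const>\<open>psd\<close>, so it is avoided: with \<open>w = E v\<close>, positivity
  on \<open>v - i w\<close> gives \<open>Re \<langle>v,Ew\<rangle> = \<parallel>w\<parallel>\<^sup>2\<close>, and then positivity on \<open>v - t w\<close>, \<open>t\<close> real,
  gives \<open>t\<^sup>2 \<langle>w,Ew\<rangle> - 2 t \<parallel>w\<parallel>\<^sup>2 \<ge> 0\<close> for all \<open>t\<close>.\<close>

lemma psd_isotropic_imp_apply_zero:
  assumes psd: "psd I E" and fin: "finite I"
    and iso: "inner_on I v (apply_op I E v) = 0" and y: "y \<in> I"
  shows "apply_op I E v y = 0"
proof -
  define w where "w = apply_op I E v"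
  define N where "N = inner_on I w w"
  define B where "B = inner_on I v (apply_op I E w)"
  define Q where "Q = inner_on I w (apply_op I E w)"
  have pos: "0 \<le> inner_on I u (apply_op I E u)" for u using psd by (simp add: psd_def)
  have perturbed: "0 \<le> cnj s * N + s * B + cnj s * s * Q" for s
    using pos[of "\<lambda>x. v x + s * w x"]
    unfolding inner_on_apply_op_add_smult iso N_def B_def Q_def w_def by simp
  have Q_nonneg: "0 \<le> Q" using pos[of w] by (simp add: Q_def)
  have "cnj (w x) * w x = of_real ((cmod (w x))\<^sup>2)" for x
    using complex_mult_cnj[of "w x"] by (simp add: mult.commute cmod_def)
  hence N_norm: "N = of_real (\<Sum>x\<in>I. (cmod (w x))\<^sup>2)" by (simp add: N_def inner_on_def)
  have "Re B = Re N"
    using perturbed[of "- \<i>"] Q_nonneg N_norm by (simp add: less_eq_complex_def)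
  hence "\<forall>t. 0 \<le> t * t * Re Q - 2 * t * Re N"
    using perturbed[of "- of_real t" for t] by (simp add: less_eq_complex_def algebra_simps)
  hence "(\<Sum>x\<in>I. (cmod (w x))\<^sup>2) = 0"
    using quadratic_nonneg_imp_linear_coeff_zero N_norm by force
  hence "(cmod (w y))\<^sup>2 = 0"
    using sum_nonneg_eq_0_iff[OF fin, of "\<lambda>x. (cmod (w x))\<^sup>2"] y by simp
  thus ?thesis by (simp add: w_def)
qed

lemma ptrans_eq_zero_iff: "ptrans E = (\<lambda>_ _. 0) \<longleftrightarrow> E = (\<lambda>_ _. 0)"
proof
  assume zero: "ptrans E = (\<lambda>_ _. 0)"
  have "E (a,b) (a',b') = ptrans E (a,b') (a',b)" for a b a' b' by (simp add: ptrans_def)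
  hence "E (a,b) (a',b') = 0" for a b a' b' by (simp add: zero)
  thus "E = (\<lambda>_ _. 0)" by (intro ext) (metis prod.collapse)
qed (simp add: ptrans_def fun_eq_iff case_prod_beta)

lemma sum_sum_swap_snd:
  "(\<Sum>x\<in>A \<times> B. \<Sum>y\<in>A \<times> B. f x y) = (\<Sum>x\<in>A \<times> B. \<Sum>y\<in>A \<times> B. f (fst x, snd y) (fst y, snd x))"
proof -
  let ?swap = "\<lambda>(x,y). ((fst x, snd y), (fst y, snd x))"
  have "(\<Sum>p\<in>(A \<times> B) \<times> (A \<times> B). f (fst p) (snd p)) =
      (\<Sum>p\<in>(A \<times> B) \<times> (A \<times> B). f (fst (?swap p)) (snd (?swap p)))"
    by (rule sum.reindex_bij_witness[of _ ?swap ?swap]) auto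
  thus ?thesis by (simp add: sum.cartesian_product case_prod_beta)
qed

lemma inner_ptrans_product:
  assumes "\<forall>a\<in>A. \<forall>b\<in>B. p (a,b) = f a * g b"
  shows "inner_on (A \<times> B) (\<lambda>(a,b). f a * cnj (g b))
           (apply_op (A \<times> B) (ptrans E) (\<lambda>(a,b). f a * cnj (g b)))
       = inner_on (A \<times> B) p (apply_op (A \<times> B) E p)"
proof -
  let ?u = "\<lambda>(a,b). f a * cnj (g b)"
  have "inner_on (A \<times> B) ?u (apply_op (A \<times> B) (ptrans E) ?u) =
      (\<Sum>x\<in>A \<times> B. \<Sum>y\<in>A \<times> B. cnj (?u x) * ptrans E x y * ?u y)"
    by (simp add: inner_on_def apply_op_def sum_distrib_left mult.assoc)
  also have "\<dots> = (\<Sum>x\<in>A \<times> B. \<Sum>y\<in>A \<times> B.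
      cnj (?u (fst x, snd y)) * ptrans E (fst x, snd y) (fst y, snd x) * ?u (fst y, snd x))"
    by (rule sum_sum_swap_snd)
  also have "\<dots> = (\<Sum>x\<in>A \<times> B. \<Sum>y\<in>A \<times> B. cnj (p x) * E x y * p y)"
    using assms by (intro sum.cong refl) (auto simp: ptrans_def mult_ac)
  also have "\<dots> = inner_on (A \<times> B) p (apply_op (A \<times> B) E p)"
    by (simp add: inner_on_def apply_op_def sum_distrib_left mult.assoc)
  finally show ?thesis .
qed

definition power_vec :: "nat \<Rightarrow> nat \<Rightarrow> complex \<Rightarrow> vec1" where
  "power_vec m n x = (\<lambda>(j,l). if (j,l) \<in> grid m n then x ^ (j + l) else 0)"

lemma inner_cspan_zero:
  assumes "\<forall>g\<in>G. (\<Sum>x\<in>X. cnj (g x) * v x) = 0" and "w \<in> cspan G"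
  shows "(\<Sum>x\<in>X. cnj (w x) * v x) = 0"
proof -
  obtain F c where F: "finite F" "F \<subseteq> G" "w = (\<lambda>x. \<Sum>g\<in>F. c g * g x)"
    using assms(2) by (auto simp: cspan_def)
  have "(\<Sum>x\<in>X. cnj (w x) * v x) = (\<Sum>g\<in>F. cnj (c g) * (\<Sum>x\<in>X. cnj (g x) * v x))"
    unfolding F(3) by (simp add: sum_distrib_left sum_distrib_right mult.assoc sum.swap[of _ X])
  also have "\<dots> = 0" using F(2) assms(1) by (intro sum.neutral) auto
  finally show ?thesis .
qed

lemma power_vec_in_perp_S:
  assumes "2 \<le> m" "2 \<le> n"
  shows "power_vec m n x \<in> perp1 m n (S_space m n)"
proof -
  have "(\<Sum>y\<in>grid m n. cnj (gen j l y) * power_vec m n x y) = 0"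
    if "j \<le> m - 2" "l \<le> n - 2" for j l
  proof -
    have "(j, l+1) \<in> grid m n" "(j+1, l) \<in> grid m n"
      using that assms by (auto simp: grid_def)
    moreover have "(\<Sum>y\<in>grid m n. cnj (gen j l y) * power_vec m n x y) =
        (\<Sum>y\<in>grid m n. (if y = (j, l+1) then power_vec m n x y else 0)
                      - (if y = (j+1, l) then power_vec m n x y else 0))"
      by (intro sum.cong refl) (auto simp: gen_def)
    ultimately show ?thesis
      by (simp add: sum_subtractf grid_def power_vec_def)
  qed
  hence "\<forall>g\<in>{gen j l | j l. j \<le> m - 2 \<and> l \<le> n - 2}.
           (\<Sum>y\<in>grid m n. cnj (g y) * power_vec m n x y) = 0" by blast
  hence "\<forall>w\<in>S_space m n. (\<Sum>y\<in>grid m n. cnj (w y) * power_vec m n x y) = 0"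
    unfolding S_space_def using inner_cspan_zero by blast
  moreover have "\<forall>y. y \<notin> grid m n \<longrightarrow> power_vec m n x y = 0"
    by (auto simp: power_vec_def)
  ultimately show ?thesis unfolding perp1_def by blast
qed

lemma tprod_in_tpow: "length vs = k \<Longrightarrow> set vs \<subseteq> V \<Longrightarrow> tprod vs \<in> tpow k V"
  unfolding tpow_def cspan_def
  by (rule CollectI, rule exI[of _ "{tprod vs}"], rule exI[of _ "\<lambda>_. 1"]) auto

lemma tprod_power_vec:
  assumes "x \<in> idxs m n k"
  shows "tprod (map (\<lambda>i. power_vec m n (z i)) [0..<k]) x = power_prod z (fst x) * power_prod z (snd x)"
proof -
  obtain a b where ab: "x = (a,b)" "length a = k" "length b = k"
    "set a \<subseteq> {..<m}" "set b \<subseteq> {..<n}"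
    using assms by (auto simp: idxs_def)
  have "(a ! i, b ! i) \<in> grid m n" if "i < k" for i
  proof -
    have "a ! i \<in> set a" "b ! i \<in> set b" using ab that by simp_all
    thus ?thesis using ab by (auto simp: grid_def)
  qed
  hence "tprod (map (\<lambda>i. power_vec m n (z i)) [0..<k]) x = (\<Prod>i<k. z i ^ (a ! i) * z i ^ (b ! i))"
    by (simp add: tprod_def ab(1) power_vec_def power_add)
  thus ?thesis by (simp add: power_prod_def ab prod.distrib)
qed

lemma ptrans_zero_if_power_states_isotropic:
  assumes psd: "psd (idxs m n k) (ptrans E)"
    and iso: "\<And>z. inner_on (idxs m n k) (tprod (map (\<lambda>i. power_vec m n (z i)) [0..<k]))
                (apply_op (idxs m n k) E (tprod (map (\<lambda>i. power_vec m n (z i)) [0..<k]))) = 0"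
  shows "ptrans E = (\<lambda>_ _. 0)"
proof (intro ext)
  fix y x
  let ?I = "idxs m n k"
  show "ptrans E y x = 0"
  proof (cases "x \<in> ?I \<and> y \<in> ?I")
    case True
    have "(\<Sum>x\<in>?I. ptrans E y x * (power_prod z (fst x) * cnj (power_prod z (snd x)))) = 0" for z
    proof -
      let ?p = "tprod (map (\<lambda>i. power_vec m n (z i)) [0..<k])"
      let ?u = "\<lambda>(a,b). power_prod z a * cnj (power_prod z b)"
      have "\<forall>a\<in>{a. length a = k \<and> set a \<subseteq> {..<m}}. \<forall>b\<in>{b. length b = k \<and> set b \<subseteq> {..<n}}.
              ?p (a,b) = power_prod z a * power_prod z b"
        using tprod_power_vec by (simp add: idxs_eq_Times)
      from inner_ptrans_product[OF this, of E] have "inner_on ?I ?u (apply_op ?I (ptrans E) ?u) = 0"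
        using iso unfolding idxs_eq_Times by simp
      hence "apply_op ?I (ptrans E) ?u y = 0"
        using psd_isotropic_imp_apply_zero[OF psd finite_idxs] True by blast
      thus ?thesis by (simp add: apply_op_def case_prod_beta)
    qed
    thus ?thesis using True power_prod_cnj_coeffs_zero[where c="ptrans E y"] by blast
  next
    case False
    thus ?thesis using psd unfolding psd_def by blast
  qed
qed

theorem theorem3:
  fixes m n :: nat
  assumes "2 \<le> m" and "m \<le> n"
  shows "strongly_ppt_unextendible m n (perp1 m n (S_space m n))"
  unfolding strongly_ppt_unextendible_def ppt_extendible_def
proof (intro allI impI notI)
  fix k :: nat
  assume "\<exists>E. ppt (idxs m n k) E \<and> E \<noteq> (\<lambda>_ _. 0) \<and>
              supp_in_perp (idxs m n k) E (tpow k (perp1 m n (S_space m n)))"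
  then obtain E where ppt: "ppt (idxs m n k) E" and nonzero: "E \<noteq> (\<lambda>_ _. 0)"
    and supp: "supp_in_perp (idxs m n k) E (tpow k (perp1 m n (S_space m n)))" by blast
  have "power_vec m n x \<in> perp1 m n (S_space m n)" for x
    using assms by (intro power_vec_in_perp_S) linarith+
  hence "tprod (map (\<lambda>i. power_vec m n (z i)) [0..<k]) \<in> tpow k (perp1 m n (S_space m n))" for z
    by (intro tprod_in_tpow) auto
  hence "ptrans E = (\<lambda>_ _. 0)"
    using ppt supp unfolding ppt_def supp_in_perp_def
    by (intro ptrans_zero_if_power_states_isotropic) blast+
  thus False using nonzero by (simp add: ptrans_eq_zero_iff)
qed

end
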